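(* Let $G$ be a graph. Then $\varphi_r(G-v)=\varphi_r(G)+\lfloor |V(G)|/2\rfloor-2$ for every vertex $v\in V(G)$ if and only if one of the following holds: (i) $G$ is $P_2$ or $C_3$; (ii) $E(G)=\emptyset$ and $4\le|V(G)|\le5$; (iii) $4\le |V(G)|\le 5$ and $G$ contains two edges with no common endpoint but contains no induced b-$3$-atom.
   Context: $P_2$ is the path on two vertices (a single edge) and $C_3$ the triangle. A proper $k$-coloring of $G$ is a surjective map $c:V(G)\to\{1,\ldots,k\}$ with $c(u)\ne c(v)$ for every edge $uv$. In a proper $k$-coloring, a vertex of color $i$ is a b-vertex if it has a neighbor of every color $j\ne i$. A b-$k$-coloring is a proper $k$-coloring in which every color class contains a b-vertex; $\varphi(G)$ is the largest $k$ such that $G$ has a b-$k$-coloring, and $\varphi_r(G)=\max\{\varphi(H): H\text{ an induced subgraph of }G\}$. A b-$t$-atom is a graph $A$ whose vertex set can be partitioned into $t$ sets $D_1,\ldots,D_t$, each $D_i$ containing a special vertex $c_i$, such that each $D_i$ is independent with $|D_i|\le t$ and, for all $i\ne j$, $c_i$ has a neighbor in $D_j$. *)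

theory Defs
  imports Main
begin

definition graph :: "'a set \<Rightarrow> 'a set set \<Rightarrow> bool" where
  "graph V E \<longleftrightarrow> finite V \<and> (\<forall>e\<in>E. \<exists>u v. u \<noteq> v \<and> u \<in> V \<and> v \<in> V \<and> e = {u, v})"

definition induced_edges :: "'a set set \<Rightarrow> 'a set \<Rightarrow> 'a set set" where
  "induced_edges E S = {e \<in> E. e \<subseteq> S}"

definition del_edges :: "'a set set \<Rightarrow> 'a \<Rightarrow> 'a set set" where
  "del_edges E v = {e \<in> E. v \<notin> e}"

definition graph_iso :: "'a set \<Rightarrow> 'a set set \<Rightarrow> 'b set \<Rightarrow> 'b set set \<Rightarrow> bool" where
  "graph_iso V E V' E' \<longleftrightarrow> (\<exists>f. bij_betw f V V' \<and>
      (\<forall>u\<in>V. \<forall>v\<in>V. {u, v} \<in> E \<longleftrightarrow> {f u, f v} \<in> E'))"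

definition P2_V :: "nat set" where "P2_V = {0, 1}"
definition P2_E :: "nat set set" where "P2_E = {{0, 1}}"
definition C3_V :: "nat set" where "C3_V = {0, 1, 2}"
definition C3_E :: "nat set set" where "C3_E = {{0, 1}, {1, 2}, {0, 2}}"

definition proper_coloring :: "'a set \<Rightarrow> 'a set set \<Rightarrow> ('a \<Rightarrow> nat) \<Rightarrow> nat \<Rightarrow> bool" where
  "proper_coloring V E c k \<longleftrightarrow> c ` V = {1..k} \<and>
     (\<forall>u\<in>V. \<forall>v\<in>V. {u, v} \<in> E \<longrightarrow> c u \<noteq> c v)"

definition b_vertex :: "'a set \<Rightarrow> 'a set set \<Rightarrow> ('a \<Rightarrow> nat) \<Rightarrow> nat \<Rightarrow> 'a \<Rightarrow> bool" where
  "b_vertex V E c k v \<longleftrightarrow> v \<in> V \<and>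
     (\<forall>j\<in>{1..k}. j \<noteq> c v \<longrightarrow> (\<exists>u\<in>V. {u, v} \<in> E \<and> c u = j))"

definition b_coloring :: "'a set \<Rightarrow> 'a set set \<Rightarrow> ('a \<Rightarrow> nat) \<Rightarrow> nat \<Rightarrow> bool" where
  "b_coloring V E c k \<longleftrightarrow> proper_coloring V E c k \<and>
     (\<forall>i\<in>{1..k}. \<exists>v\<in>V. c v = i \<and> b_vertex V E c k v)"

definition b_chromatic :: "'a set \<Rightarrow> 'a set set \<Rightarrow> nat" where
  "b_chromatic V E = Max {k. \<exists>c. b_coloring V E c k}"

definition b_chromatic_r :: "'a set \<Rightarrow> 'a set set \<Rightarrow> nat" where
  "b_chromatic_r V E = Max {b_chromatic S (induced_edges E S) | S. S \<subseteq> V}"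

definition b_atom :: "'a set \<Rightarrow> 'a set set \<Rightarrow> nat \<Rightarrow> bool" where
  "b_atom V E t \<longleftrightarrow> (\<exists>(D :: nat \<Rightarrow> 'a set) (c :: nat \<Rightarrow> 'a).
      (\<Union>i\<in>{1..t}. D i) = V \<and>
      (\<forall>i\<in>{1..t}. \<forall>j\<in>{1..t}. i \<noteq> j \<longrightarrow> D i \<inter> D j = {}) \<and>
      (\<forall>i\<in>{1..t}. c i \<in> D i \<and> card (D i) \<le> t \<and>
          (\<forall>u\<in>D i. \<forall>w\<in>D i. {u, w} \<notin> E)) \<and>
      (\<forall>i\<in>{1..t}. \<forall>j\<in>{1..t}. i \<noteq> j \<longrightarrow> (\<exists>u\<in>D j. {c i, u} \<in> E)))"

end

theory Submission
  imports Defs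
begin

text \<open>
  \<open>\<phi>\<^sub>r(G)\<close> is the largest k such that some induced subgraph of G has a b-k-colouring, and
  this property is downward closed: removing one colour class of a b-colouring (and with it a
  given vertex) leaves a b-colouring with one colour less. Hence
  \<open>\<phi>\<^sub>r(G) - 1 \<le> \<phi>\<^sub>r(G - v) \<le> \<phi>\<^sub>r(G)\<close>, so the identity forces \<open>\<lfloor>n/2\<rfloor> - 2 \<in> {-1, 0}\<close>,
  i.e. \<open>2 \<le> n \<le> 5\<close>.

  For \<open>n \<in> {2, 3}\<close> every deletion must lower \<open>\<phi>\<^sub>r\<close>, which happens exactly for complete
  graphs. For \<open>n \<in> {4, 5}\<close> every deletion must preserve \<open>\<phi>\<^sub>r\<close>. Edgeless graphs do so;
  \<open>\<phi>\<^sub>r \<ge> 3\<close> is impossible, since it forces n = 5, \<open>\<phi>\<^sub>r\<close> = 3 and a K4-free graph with a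
  triangle in every 4-vertex subgraph; and \<open>\<phi>\<^sub>r\<close> = 2 survives all deletions exactly when no
  vertex meets every edge, which for triangle-free graphs means that two edges are disjoint.
  Finally, G contains an induced b-3-atom iff \<open>\<phi>\<^sub>r(G) \<ge> 3\<close>.
\<close>

definition loopless :: "'a set set \<Rightarrow> bool" where
  "loopless E \<longleftrightarrow> (\<forall>u. {u} \<notin> E)"

definition proper_on :: "'a set \<Rightarrow> 'a set set \<Rightarrow> ('a \<Rightarrow> nat) \<Rightarrow> bool" where
  "proper_on S E c \<longleftrightarrow> (\<forall>u\<in>S. \<forall>v\<in>S. {u, v} \<in> E \<longrightarrow> c u \<noteq> c v)"

definition clique :: "'a set set \<Rightarrow> 'a set \<Rightarrow> bool" where
  "clique E A \<longleftrightarrow> (\<forall>u\<in>A. \<forall>w\<in>A. u \<noteq> w \<longrightarrow> {u, w} \<in> E)"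

definition induced_b_colorable :: "'a set set \<Rightarrow> 'a set \<Rightarrow> nat \<Rightarrow> bool" where
  "induced_b_colorable E A k \<longleftrightarrow> (\<exists>S\<subseteq>A. \<exists>c. b_coloring S (induced_edges E S) c k)"

lemma proper_on_drop_color:
  assumes "c ` S \<subseteq> {1..k} - {i}" "i \<in> {1..k}" "proper_on S E c"
  shows "\<exists>c'. c' ` S \<subseteq> {1..k-1} \<and> proper_on S E c'"
proof (intro exI conjI)
  let ?c' = "\<lambda>x. if c x > i then c x - 1 else c x"
  show "?c' ` S \<subseteq> {1..k-1}"
  proof
    fix y assume "y \<in> ?c' ` S"
    then obtain x where "x \<in> S" "y = ?c' x" by blast
    moreover have "c x \<in> {1..k} - {i}"
      using assms(1) \<open>x \<in> S\<close> by blast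
    ultimately show "y \<in> {1..k-1}"
      using assms(2) by auto
  qed
  show "proper_on S E ?c'"
    unfolding proper_on_def
  proof (intro ballI impI)
    fix u v assume "u \<in> S" "v \<in> S" "{u, v} \<in> E"
    then have "c u \<noteq> c v" "c u \<noteq> i" "c v \<noteq> i"
      using assms(1,3) unfolding proper_on_def by auto
    then show "?c' u \<noteq> ?c' v"
      by auto
  qed
qed

lemma proper_on_recolor_class:
  assumes c: "c ` S \<subseteq> {1..k}" "proper_on S E c" and i: "i \<in> {1..k}"
    and no_b: "\<forall>v\<in>S. c v = i \<longrightarrow> \<not> b_vertex S E c k v"
  shows "\<exists>c'. c' ` S \<subseteq> {1..k} - {i} \<and> proper_on S E c'"
proof -
  have "\<forall>v\<in>{v\<in>S. c v = i}. \<exists>j. j \<in> {1..k} \<and> j \<noteq> i \<and> \<not> (\<exists>u\<in>S. {u, v} \<in> E \<and> c u = j)"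
    using no_b unfolding b_vertex_def by blast
  then obtain miss where miss_all: "\<forall>v\<in>{v\<in>S. c v = i}.
       miss v \<in> {1..k} \<and> miss v \<noteq> i \<and> \<not> (\<exists>u\<in>S. {u, v} \<in> E \<and> c u = miss v)"
    by (rule bchoice[elim_format]) blast
  then have miss: "miss v \<in> {1..k} \<and> miss v \<noteq> i \<and> \<not> (\<exists>u\<in>S. {u, v} \<in> E \<and> c u = miss v)"
    if "v \<in> S" "c v = i" for v
    using that by blast
  define c' where "c' v = (if c v = i then miss v else c v)" for v
  have "c' ` S \<subseteq> {1..k} - {i}"
    using miss c(1) unfolding c'_def by auto
  moreover have "proper_on S E c'"
    unfolding proper_on_def
  proof (intro ballI impI)
    fix u v assume uv: "u \<in> S" "v \<in> S" "{u, v} \<in> E"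
    then have "{v, u} \<in> E" "c u \<noteq> c v"
      using c(2) unfolding proper_on_def by (auto simp: insert_commute)
    then show "c' u \<noteq> c' v"
      using miss[of u] miss[of v] uv unfolding c'_def by auto
  qed
  ultimately show ?thesis by blast
qed

text \<open>A colour class without b-vertex could be recoloured away, contradicting minimality.\<close>
lemma least_proper_coloring_b_coloring:
  assumes c: "c ` S \<subseteq> {1..k}" "proper_on S E c"
    and least: "\<And>j c'. j < k \<Longrightarrow> c' ` S \<subseteq> {1..j} \<Longrightarrow> \<not> proper_on S E c'"
  shows "b_coloring S E c k"
proof -
  have no_drop: False if "c' ` S \<subseteq> {1..k} - {i}" "i \<in> {1..k}" "proper_on S E c'" for c' i
    using proper_on_drop_color[OF that] least[of "k - 1"] that(2) by auto
  have "c ` S = {1..k}"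
  proof (rule ccontr)
    assume "c ` S \<noteq> {1..k}"
    then obtain i where "i \<in> {1..k}" "c ` S \<subseteq> {1..k} - {i}"
      using c(1) by blast
    then show False
      using no_drop c(2) by blast
  qed
  moreover have "\<exists>v\<in>S. c v = i \<and> b_vertex S E c k v" if i: "i \<in> {1..k}" for i
  proof (rule ccontr)
    assume "\<not> (\<exists>v\<in>S. c v = i \<and> b_vertex S E c k v)"
    then obtain c' where "c' ` S \<subseteq> {1..k} - {i}" "proper_on S E c'"
      using proper_on_recolor_class[OF c i] by blast
    then show False
      using no_drop i by blast
  qed
  ultimately show ?thesis
    using c(2) unfolding b_coloring_def proper_coloring_def proper_on_def by blast
qed

lemma b_coloring_exists:
  assumes "finite S" "loopless E"
  shows "\<exists>k c. b_coloring S E c k"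
proof -
  define P where "P k \<longleftrightarrow> (\<exists>c. c ` S \<subseteq> {1..k} \<and> proper_on S E c)" for k
  obtain h where h: "bij_betw h S {1..card S}"
    using finite_same_card_bij[OF assms(1), of "{1..card S}"] by auto
  have "P (card S)"
    unfolding P_def proper_on_def
  proof (intro exI conjI ballI impI)
    show "h ` S \<subseteq> {1..card S}"
      using h by (simp add: bij_betw_def)
    fix u v assume "u \<in> S" "v \<in> S" "{u, v} \<in> E"
    moreover have "u \<noteq> v"
      using \<open>{u, v} \<in> E\<close> assms(2) unfolding loopless_def by auto
    ultimately show "h u \<noteq> h v"
      using h by (auto simp: bij_betw_def inj_on_def)
  qed
  then have "P (LEAST k. P k)"
    by (rule LeastI)
  then obtain c where "c ` S \<subseteq> {1..LEAST k. P k}" "proper_on S E c"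
    unfolding P_def by blast
  moreover have "\<not> proper_on S E c'" if "j < (LEAST k. P k)" "c' ` S \<subseteq> {1..j}" for j c'
    using not_less_Least[OF that(1)] that(2) unfolding P_def by blast
  ultimately have "b_coloring S E c (LEAST k. P k)"
    by (rule least_proper_coloring_b_coloring)
  then show ?thesis
    by blast
qed

lemma b_coloring_le_card: "b_coloring S E c k \<Longrightarrow> finite S \<Longrightarrow> k \<le> card S"
  unfolding b_coloring_def proper_coloring_def
  by (metis card_atLeastAtMost card_image_le diff_Suc_1)

lemma finite_b_coloring_numbers: "finite S \<Longrightarrow> finite {k. \<exists>c. b_coloring S E c k}"
  using b_coloring_le_card by (blast intro: finite_subset[of _ "{..card S}"])

lemma b_chromatic_ge: "finite S \<Longrightarrow> b_coloring S E c k \<Longrightarrow> k \<le> b_chromatic S E"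
  unfolding b_chromatic_def by (blast intro: Max_ge finite_b_coloring_numbers)

lemma b_chromatic_attained:
  assumes "finite S" "loopless E"
  shows "\<exists>c. b_coloring S E c (b_chromatic S E)"
proof -
  have "{k. \<exists>c. b_coloring S E c k} \<noteq> {}"
    using b_coloring_exists[OF assms] by blast
  from Max_in[OF finite_b_coloring_numbers[OF assms(1)] this] show ?thesis
    unfolding b_chromatic_def by blast
qed

lemma induced_edges_induced_edges:
  "T \<subseteq> S \<Longrightarrow> induced_edges (induced_edges E S) T = induced_edges E T"
  by (auto simp: induced_edges_def)

lemma loopless_induced_edges: "loopless E \<Longrightarrow> loopless (induced_edges E S)"
  by (simp add: loopless_def induced_edges_def)

lemma induced_b_colorable_mono: "induced_b_colorable E A k \<Longrightarrow> A \<subseteq> B \<Longrightarrow> induced_b_colorable E B k"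
  unfolding induced_b_colorable_def by blast

lemma induced_b_colorable_zero: "induced_b_colorable E A 0"
proof -
  have "b_coloring {} (induced_edges E {}) c 0" for c
    by (simp add: b_coloring_def proper_coloring_def)
  then show ?thesis
    unfolding induced_b_colorable_def by blast
qed

text \<open>Every remaining b-vertex loses only its neighbours of colour i.\<close>
lemma b_coloring_remove_color_class:
  assumes b: "b_coloring S F c k" and i: "i \<in> {1..k}"
  defines "S' \<equiv> {x\<in>S. c x \<noteq> i}"
  shows "b_coloring S' (induced_edges F S') (\<lambda>x. if c x > i then c x - 1 else c x) (k - 1)"
proof -
  define sh where "sh a = (if a > i then a - 1 else a)" for a :: nat
  define un where "un b = (if b \<ge> i then b + 1 else b)" for b :: nat
  have sh: "sh a \<in> {1..k-1}" "un (sh a) = a" if "a \<in> {1..k}" "a \<noteq> i" for a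
    using that i unfolding sh_def un_def by auto
  have un: "un b \<in> {1..k}" "un b \<noteq> i" "sh (un b) = b" if "b \<in> {1..k-1}" for b
    using that i unfolding sh_def un_def by auto
  have img: "c ` S = {1..k}" and proper: "\<forall>u\<in>S. \<forall>w\<in>S. {u, w} \<in> F \<longrightarrow> c u \<noteq> c w"
    and bv: "\<forall>j\<in>{1..k}. \<exists>w\<in>S. c w = j \<and> b_vertex S F c k w"
    using b unfolding b_coloring_def proper_coloring_def by auto
  have col: "c x \<in> {1..k}" if "x \<in> S" for x
    using img that by blast
  have S': "x \<in> S'" if "x \<in> S" "c x \<noteq> i" for x
    using that unfolding S'_def by blast
  have edge_S': "{u, w} \<in> induced_edges F S' \<longleftrightarrow> {u, w} \<in> F" if "u \<in> S'" "w \<in> S'" for u w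
    using that unfolding induced_edges_def by auto
  have "(sh \<circ> c) ` S' = {1..k-1}"
  proof
    show "(sh \<circ> c) ` S' \<subseteq> {1..k-1}"
      using col sh(1) unfolding S'_def by auto
    show "{1..k-1} \<subseteq> (sh \<circ> c) ` S'"
    proof
      fix b assume b: "b \<in> {1..k-1}"
      then obtain x where "x \<in> S" "c x = un b"
        using img un(1) by (metis imageE)
      then show "b \<in> (sh \<circ> c) ` S'"
        using S' un(2,3)[OF b] by (metis comp_apply image_eqI)
    qed
  qed
  moreover have "(sh \<circ> c) u \<noteq> (sh \<circ> c) w" if "u \<in> S'" "w \<in> S'" "{u, w} \<in> induced_edges F S'" for u w
    using that proper edge_S' img sh(2) unfolding S'_def by (metis (mono_tags, lifting) comp_apply image_eqI mem_Collect_eq)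
  moreover have "\<exists>w\<in>S'. (sh \<circ> c) w = b \<and> b_vertex S' (induced_edges F S') (sh \<circ> c) (k-1) w"
    if b: "b \<in> {1..k-1}" for b
  proof -
    obtain w where w: "w \<in> S" "c w = un b" "b_vertex S F c k w"
      using bv un(1)[OF b] by blast
    have "w \<in> S'"
      using S' w un(2)[OF b] by simp
    moreover have "\<exists>u\<in>S'. {u, w} \<in> induced_edges F S' \<and> (sh \<circ> c) u = l"
      if l: "l \<in> {1..k-1}" "l \<noteq> b" for l
    proof -
      have "un l \<noteq> c w"
        using w(2) un(3) b l by metis
      then obtain u where "u \<in> S" "{u, w} \<in> F" "c u = un l"
        using w(3) un(1)[OF l(1)] unfolding b_vertex_def by blast
      then show ?thesis
        using S' edge_S' \<open>w \<in> S'\<close> un(2,3)[OF l(1)] by auto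
    qed
    ultimately show ?thesis
      using w(2) un(3)[OF b] unfolding b_vertex_def by (metis comp_apply)
  qed
  ultimately show ?thesis
    unfolding b_coloring_def proper_coloring_def sh_def comp_def by auto
qed

lemma induced_b_colorable_delete_vertex:
  assumes "induced_b_colorable E A k"
  shows "induced_b_colorable E (A - {v}) (k - 1)"
proof (cases "k = 0")
  case True
  then show ?thesis
    using induced_b_colorable_zero by simp
next
  case False
  obtain S c where S: "S \<subseteq> A" "b_coloring S (induced_edges E S) c k"
    using assms unfolding induced_b_colorable_def by blast
  define i where "i = (if v \<in> S then c v else 1)"
  have "i \<in> {1..k}"
    using S(2) False unfolding i_def b_coloring_def proper_coloring_def by auto
  from b_coloring_remove_color_class[OF S(2) this]
  have "b_coloring {x\<in>S. c x \<noteq> i} (induced_edges E {x\<in>S. c x \<noteq> i})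
      (\<lambda>x. if c x > i then c x - 1 else c x) (k - 1)"
    by (simp add: induced_edges_induced_edges)
  moreover have "{x\<in>S. c x \<noteq> i} \<subseteq> A - {v}"
    using S(1) unfolding i_def by auto
  ultimately show ?thesis
    unfolding induced_b_colorable_def by blast
qed

lemma induced_b_colorable_le:
  assumes "induced_b_colorable E A k" "j \<le> k"
  shows "induced_b_colorable E A j"
  using assms(2)
proof (induction rule: inc_induct)
  case (step m)
  then show ?case
    using induced_b_colorable_delete_vertex induced_b_colorable_mono by (metis Diff_subset diff_Suc_1)
qed (rule assms(1))

lemma le_b_chromatic_r_iff:
  assumes "finite V" "loopless E"
  shows "k \<le> b_chromatic_r V E \<longleftrightarrow> induced_b_colorable E V k"
proof -
  let ?Phi = "{b_chromatic S (induced_edges E S) |S. S \<subseteq> V}"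
  have fin: "finite ?Phi"
    using assms(1) by (simp add: setcompr_eq_image)
  have colorable: "induced_b_colorable E V (b_chromatic S (induced_edges E S))" if S: "S \<subseteq> V" for S
  proof -
    obtain c where "b_coloring S (induced_edges E S) c (b_chromatic S (induced_edges E S))"
      using b_chromatic_attained[OF finite_subset[OF S assms(1)] loopless_induced_edges[OF assms(2)]]
      by blast
    then show ?thesis
      using S unfolding induced_b_colorable_def by blast
  qed
  show ?thesis
  proof
    assume "k \<le> b_chromatic_r V E"
    moreover have "b_chromatic_r V E \<in> ?Phi"
      unfolding b_chromatic_r_def using fin by (rule Max_in) blast
    then obtain S where "S \<subseteq> V" "b_chromatic_r V E = b_chromatic S (induced_edges E S)"
      by blast
    ultimately show "induced_b_colorable E V k"
      using colorable induced_b_colorable_le by metis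
  next
    assume "induced_b_colorable E V k"
    then obtain S c where S: "S \<subseteq> V" "b_coloring S (induced_edges E S) c k"
      unfolding induced_b_colorable_def by blast
    then have "k \<le> b_chromatic S (induced_edges E S)"
      using b_chromatic_ge[OF finite_subset[OF S(1) assms(1)]] by blast
    also have "\<dots> \<le> b_chromatic_r V E"
      unfolding b_chromatic_r_def using fin S(1) by (intro Max_ge) blast+
    finally show "k \<le> b_chromatic_r V E" .
  qed
qed

lemma induced_b_colorable_b_chromatic_r:
  "finite V \<Longrightarrow> loopless E \<Longrightarrow> induced_b_colorable E V (b_chromatic_r V E)"
  using le_b_chromatic_r_iff by blast

lemma b_chromatic_r_induced_edges: "b_chromatic_r V (induced_edges E V) = b_chromatic_r V E"
proof -
  have "{b_chromatic S (induced_edges (induced_edges E V) S) |S. S \<subseteq> V}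
      = {b_chromatic S (induced_edges E S) |S. S \<subseteq> V}"
    by (metis induced_edges_induced_edges)
  then show ?thesis
    unfolding b_chromatic_r_def by simp
qed

lemma b_coloring_clique:
  assumes "finite K" "loopless E" "clique E K"
  shows "\<exists>c. b_coloring K (induced_edges E K) c (card K)"
proof -
  obtain h where h: "bij_betw h K {1..card K}"
    using finite_same_card_bij[OF assms(1), of "{1..card K}"] by auto
  then have img: "h ` K = {1..card K}" and inj: "inj_on h K"
    by (auto simp: bij_betw_def)
  have edge: "{u, w} \<in> induced_edges E K \<longleftrightarrow> u \<noteq> w" if "u \<in> K" "w \<in> K" for u w
    using assms(2,3) that unfolding clique_def loopless_def induced_edges_def by auto
  have "b_vertex K (induced_edges E K) h (card K) x" if x: "x \<in> K" for x
    unfolding b_vertex_def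
  proof (intro conjI ballI impI)
    fix j assume "j \<in> {1..card K}" "j \<noteq> h x"
    then obtain u where "u \<in> K" "h u = j"
      using img by (metis imageE)
    then show "\<exists>u\<in>K. {u, x} \<in> induced_edges E K \<and> h u = j"
      using edge x \<open>j \<noteq> h x\<close> by blast
  qed (rule x)
  moreover have "h u \<noteq> h w" if "u \<in> K" "w \<in> K" "{u, w} \<in> induced_edges E K" for u w
    using edge inj that by (auto dest: inj_onD)
  ultimately have "b_coloring K (induced_edges E K) h (card K)"
    unfolding b_coloring_def proper_coloring_def using img by (metis imageE)
  then show ?thesis
    by blast
qed

lemma induced_b_colorable_clique:
  assumes "finite K" "K \<subseteq> A" "loopless E" "clique E K"
  shows "induced_b_colorable E A (card K)"
  using b_coloring_clique[OF assms(1,3,4)] assms(2) unfolding induced_b_colorable_def by blast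

lemma induced_b_colorable_le_card:
  assumes "finite A" "induced_b_colorable E A k"
  shows "k \<le> card A"
proof -
  obtain S c where S: "S \<subseteq> A" "b_coloring S (induced_edges E S) c k"
    using assms(2) unfolding induced_b_colorable_def by blast
  have "k \<le> card S"
    using b_coloring_le_card[OF S(2) finite_subset[OF S(1) assms(1)]] .
  also have "\<dots> \<le> card A"
    using card_mono[OF assms(1) S(1)] .
  finally show ?thesis .
qed

text \<open>With as many colours as vertices, every vertex is a singleton class and its own b-vertex,
  so it must see all other vertices.\<close>
lemma clique_if_induced_b_colorable_card:
  assumes "finite A" "induced_b_colorable E A k" "card A \<le> k"
  shows "clique E A"
proof -
  obtain S c where S: "S \<subseteq> A" "b_coloring S (induced_edges E S) c k"
    using assms(2) unfolding induced_b_colorable_def by blast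
  have fin: "finite S"
    using S(1) assms(1) finite_subset by blast
  have "k \<le> card S" "card S \<le> card A"
    using b_coloring_le_card[OF S(2) fin] card_mono[OF assms(1) S(1)] .
  then have SA: "S = A" and card: "card S = k"
    using card_subset_eq[OF assms(1) S(1)] assms(3) by auto
  have img: "c ` S = {1..k}"
    using S(2) unfolding b_coloring_def proper_coloring_def by blast
  then have inj: "inj_on c S"
    using card eq_card_imp_inj_on[OF fin, of c] by simp
  have bv: "\<exists>x\<in>S. c x = i \<and> b_vertex S (induced_edges E S) c k x" if "i \<in> {1..k}" for i
    using S(2) that unfolding b_coloring_def by blast
  show ?thesis
    unfolding clique_def
  proof (intro ballI impI)
    fix u w assume uw: "u \<in> A" "w \<in> A" "u \<noteq> w"
    obtain x where x: "x \<in> S" "c x = c w" "b_vertex S (induced_edges E S) c k x"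
      using bv img uw(2) SA by blast
    then have "x = w"
      using inj uw(2) SA by (auto dest: inj_onD)
    moreover have "c u \<in> {1..k}" "c u \<noteq> c w"
      using img uw SA inj by (auto dest: inj_onD)
    ultimately obtain y where "y \<in> S" "{y, w} \<in> induced_edges E S" "c y = c u"
      using x(3) unfolding b_vertex_def by blast
    moreover have "y = u"
      using calculation(1,3) inj uw(1) SA by (auto dest: inj_onD)
    ultimately show "{u, w} \<in> E"
      unfolding induced_edges_def by blast
  qed
qed

lemma induced_b_colorable_edgeless:
  assumes "induced_b_colorable E A k" "\<forall>u\<in>A. \<forall>w\<in>A. {u, w} \<notin> E"
  shows "k \<le> 1"
proof (rule ccontr)
  assume "\<not> k \<le> 1"
  obtain S c where S: "S \<subseteq> A" "b_coloring S (induced_edges E S) c k"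
    using assms(1) unfolding induced_b_colorable_def by blast
  have colors: "1 \<in> {1..k}" "2 \<in> {1..k}"
    using \<open>\<not> k \<le> 1\<close> by auto
  then obtain w where w: "w \<in> S" "c w = 1" "b_vertex S (induced_edges E S) c k w"
    using S(2) unfolding b_coloring_def by blast
  then obtain u where "u \<in> S" "{u, w} \<in> induced_edges E S"
    using colors(2) unfolding b_vertex_def by fastforce
  then show False
    using assms(2) S(1) w(1) unfolding induced_edges_def by blast
qed

lemma b_vertex_adjacent_singleton_class:
  assumes "b_vertex S F c k x" "y \<in> S" "c y \<in> {1..k}" "c y \<noteq> c x"
    and "\<forall>z\<in>S. c z = c y \<longrightarrow> z = y"
  shows "{x, y} \<in> F"
proof -
  obtain u where "u \<in> S" "{u, x} \<in> F" "c u = c y"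
    using assms(1,3,4) unfolding b_vertex_def by blast
  then show ?thesis
    using assms(5) by (metis insert_commute)
qed

text \<open>On at most four vertices, two of the three colour classes are singletons; their
  vertices and a b-vertex of the third colour form a triangle.\<close>
lemma b_coloring_3_small_triangle:
  assumes b: "b_coloring S F c 3" and fin: "finite S" "card S \<le> 4"
  shows "\<exists>T\<subseteq>S. card T = 3 \<and> clique F T"
proof -
  have "\<forall>j\<in>{1..3::nat}. \<exists>v. v \<in> S \<and> c v = j \<and> b_vertex S F c 3 v"
    using b unfolding b_coloring_def by blast
  then obtain w where w: "\<And>j. j \<in> {1..3} \<Longrightarrow> w j \<in> S \<and> c (w j) = j \<and> b_vertex S F c 3 (w j)"
    by (metis bchoice)
  define single where "single j \<longleftrightarrow> (\<forall>x\<in>S. c x = j \<longrightarrow> x = w j)" for j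
  have at_most_one_fat: "j = l" if jl: "\<not> single j" "\<not> single l" for j l
  proof (rule ccontr)
    assume "j \<noteq> l"
    obtain x where x: "x \<in> S" "c x = j" "x \<noteq> w j"
      using jl(1) unfolding single_def by blast
    obtain y where y: "y \<in> S" "c y = l" "y \<noteq> w l"
      using jl(2) unfolding single_def by blast
    have "inj_on w {1..3}"
      using w by (metis inj_onI)
    then have "card (w ` {1..3}) = 3"
      by (simp add: card_image)
    moreover have "x \<notin> w ` {1..3}"
      using w x by (metis imageE)
    moreover have "y \<notin> w ` {1..3}"
      using w y by (metis imageE)
    moreover have "x \<noteq> y"
      using x(2) y(2) \<open>j \<noteq> l\<close> by blast
    ultimately have "card (insert x (insert y (w ` {1..3}))) = 5"
      by simp
    moreover have "w ` {1..3} \<subseteq> S"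
      using w by auto
    then have "insert x (insert y (w ` {1..3})) \<subseteq> S"
      using x(1) y(1) by simp
    ultimately have "5 \<le> card S"
      using card_mono[OF fin(1)] by metis
    then show False
      using fin(2) by simp
  qed
  have triangle: "\<exists>T\<subseteq>S. card T = 3 \<and> clique F T"
    if abd: "{a, b, d} = {1..3}" "distinct [a, b, d]" "single a" "single b" for a b d
  proof -
    have in3: "a \<in> {1..3}" "b \<in> {1..3}" "d \<in> {1..3}"
      using abd(1) by blast+
    have adj: "{w i, w j} \<in> F" if ij: "i \<in> {1..3}" "j \<in> {a, b}" "i \<noteq> j" for i j
    proof (rule b_vertex_adjacent_singleton_class)
      have j: "j \<in> {1..3}"
        using ij(2) in3 by blast
      show "b_vertex S F c 3 (w i)" "w j \<in> S" "c (w j) \<in> {1..3}" "c (w j) \<noteq> c (w i)"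
        using w[OF ij(1)] w[OF j] j ij(3) by simp_all
      show "\<forall>z\<in>S. c z = c (w j) \<longrightarrow> z = w j"
        using w[OF j] ij(2) abd(3,4) unfolding single_def by auto
    qed
    have "clique F {w a, w b, w d}"
      unfolding clique_def using adj[of d a] adj[of d b] adj[of a b] in3 abd(2)
      by (auto simp: insert_commute)
    moreover have "w a \<noteq> w b" "w a \<noteq> w d" "w b \<noteq> w d"
      using w[OF in3(1)] w[OF in3(2)] w[OF in3(3)] abd(2) by auto
    then have "card {w a, w b, w d} = 3"
      by simp
    moreover have "{w a, w b, w d} \<subseteq> S"
      using w[OF in3(1)] w[OF in3(2)] w[OF in3(3)] by simp
    ultimately show ?thesis
      by blast
  qed
  consider "single 1" "single 2" | "single 1" "single 3" | "single 2" "single 3"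
    using at_most_one_fat[of 1 2] at_most_one_fat[of 1 3] at_most_one_fat[of 2 3] by auto
  then show ?thesis
  proof cases
    case 1
    show ?thesis
      by (rule triangle[of 1 2 3]) (use 1 in auto)
  next
    case 2
    show ?thesis
      by (rule triangle[of 1 3 2]) (use 2 in auto)
  next
    case 3
    show ?thesis
      by (rule triangle[of 2 3 1]) (use 3 in auto)
  qed
qed

lemma triangle_if_induced_b_colorable_3:
  assumes "finite A" "card A \<le> 4" "induced_b_colorable E A 3"
  shows "\<exists>T\<subseteq>A. card T = 3 \<and> clique E T"
proof -
  obtain S c where S: "S \<subseteq> A" "b_coloring S (induced_edges E S) c 3"
    using assms(3) unfolding induced_b_colorable_def by blast
  have "finite S" "card S \<le> 4"
    using finite_subset[OF S(1) assms(1)] card_mono[OF assms(1) S(1)] assms(2) by simp_all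
  then obtain T where "T \<subseteq> S" "card T = 3" "clique (induced_edges E S) T"
    using b_coloring_3_small_triangle[OF S(2)] by blast
  moreover from this(3) have "clique E T"
    unfolding clique_def induced_edges_def by blast
  ultimately show ?thesis
    using S(1) by blast
qed

text \<open>Colour each vertex by the index of its part; the special vertices are b-vertices.\<close>
lemma b_atom_b_coloring:
  assumes "b_atom S F t"
  shows "\<exists>c. b_coloring S F c t"
proof -
  obtain D :: "nat \<Rightarrow> 'a set" and sp :: "nat \<Rightarrow> 'a" where
    cover: "(\<Union>i\<in>{1..t}. D i) = S" and
    disj: "\<forall>i\<in>{1..t}. \<forall>j\<in>{1..t}. i \<noteq> j \<longrightarrow> D i \<inter> D j = {}" and
    parts: "\<forall>i\<in>{1..t}. sp i \<in> D i \<and> card (D i) \<le> t \<and> (\<forall>u\<in>D i. \<forall>w\<in>D i. {u, w} \<notin> F)" and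
    dom: "\<forall>i\<in>{1..t}. \<forall>j\<in>{1..t}. i \<noteq> j \<longrightarrow> (\<exists>u\<in>D j. {sp i, u} \<in> F)"
    using assms unfolding b_atom_def by (elim exE conjE) (rule that)
  define col where "col x = (THE i. i \<in> {1..t} \<and> x \<in> D i)" for x
  have col: "col x = i" if "x \<in> D i" "i \<in> {1..t}" for x i
    unfolding col_def using that disj by (intro the_equality) blast+
  have in_S: "x \<in> S" if "x \<in> D i" "i \<in> {1..t}" for x i
    using cover that by blast
  have part: "\<exists>i\<in>{1..t}. x \<in> D i" if "x \<in> S" for x
    using cover that by blast
  have sp: "sp i \<in> S" "col (sp i) = i" if "i \<in> {1..t}" for i
    using parts that in_S col by blast+
  have "col ` S = {1..t}"
  proof
    show "col ` S \<subseteq> {1..t}"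
      using part col by fastforce
    show "{1..t} \<subseteq> col ` S"
      using sp by (metis image_eqI subsetI)
  qed
  moreover have "col u \<noteq> col w" if "u \<in> S" "w \<in> S" "{u, w} \<in> F" for u w
  proof -
    obtain i j where "i \<in> {1..t}" "u \<in> D i" "j \<in> {1..t}" "w \<in> D j"
      using part \<open>u \<in> S\<close> \<open>w \<in> S\<close> by blast
    moreover have "i \<noteq> j"
      using calculation parts \<open>{u, w} \<in> F\<close> by blast
    ultimately show ?thesis
      using col by simp
  qed
  moreover have "b_vertex S F col t (sp i)" if i: "i \<in> {1..t}" for i
    unfolding b_vertex_def
  proof (intro conjI ballI impI)
    show "sp i \<in> S"
      using sp(1)[OF i] .
    fix j assume j: "j \<in> {1..t}" "j \<noteq> col (sp i)"
    then have "i \<noteq> j"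
      using sp(2)[OF i] by simp
    then obtain u where u: "u \<in> D j" "{sp i, u} \<in> F"
      using dom i j(1) by blast
    then show "\<exists>u\<in>S. {u, sp i} \<in> F \<and> col u = j"
      using in_S[OF u(1) j(1)] col[OF u(1) j(1)] by (auto simp: insert_commute)
  qed
  ultimately have "b_coloring S F col t"
    unfolding b_coloring_def proper_coloring_def using sp by blast
  then show ?thesis
    by blast
qed

text \<open>The atom consists of one b-vertex per colour together with one neighbour of each other
  colour, grouped by colour.\<close>
lemma b_coloring_b_atom:
  assumes b: "b_coloring S F c t"
  shows "\<exists>S'\<subseteq>S. b_atom S' (induced_edges F S') t"
proof -
  have proper: "\<forall>u\<in>S. \<forall>v\<in>S. {u, v} \<in> F \<longrightarrow> c u \<noteq> c v"
    using b unfolding b_coloring_def proper_coloring_def by blast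
  have "\<forall>j\<in>{1..t}. \<exists>v. v \<in> S \<and> c v = j \<and> b_vertex S F c t v"
    using b unfolding b_coloring_def by blast
  then obtain w where w: "\<And>j. j \<in> {1..t} \<Longrightarrow> w j \<in> S \<and> c (w j) = j \<and> b_vertex S F c t (w j)"
    by (metis bchoice)
  have "\<exists>u. u \<in> S \<and> {u, w i} \<in> F \<and> c u = j" if "i \<in> {1..t}" "j \<in> {1..t}" "i \<noteq> j" for i j
    using w[OF that(1)] that unfolding b_vertex_def by auto
  then obtain nb where nb: "\<And>i j. i \<in> {1..t} \<Longrightarrow> j \<in> {1..t} \<Longrightarrow> i \<noteq> j \<Longrightarrow>
      nb i j \<in> S \<and> {nb i j, w i} \<in> F \<and> c (nb i j) = j"
    by metis
  define D where "D j = insert (w j) ((\<lambda>i. nb i j) ` ({1..t} - {j}))" for j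
  define S' where "S' = (\<Union>j\<in>{1..t}. D j)"
  have D: "x \<in> S \<and> c x = j" if x: "x \<in> D j" and j: "j \<in> {1..t}" for x j
  proof -
    consider "x = w j" | i where "i \<in> {1..t}" "i \<noteq> j" "x = nb i j"
      using x unfolding D_def by blast
    then show ?thesis
    proof cases
      case 1
      then show ?thesis
        using w[OF j] by simp
    next
      case 2
      then show ?thesis
        using nb[OF 2(1) j 2(2)] by simp
    qed
  qed
  have "S' \<subseteq> S"
    unfolding S'_def by (auto dest: D)
  have "b_atom S' (induced_edges F S') t"
    unfolding b_atom_def
  proof (intro exI conjI ballI impI)
    show "(\<Union>i\<in>{1..t}. D i) = S'"
      unfolding S'_def ..
  next
    fix i j assume ij: "i \<in> {1..t}" "j \<in> {1..t}" "i \<noteq> j"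
    show "D i \<inter> D j = {}"
    proof (intro equals0I)
      fix x assume "x \<in> D i \<inter> D j"
      then show False
        using D[of x i] D[of x j] ij by auto
    qed
  next
    fix i assume i: "i \<in> {1..t}"
    show "w i \<in> D i"
      unfolding D_def by simp
    have "card (D i) \<le> Suc (card ((\<lambda>i'. nb i' i) ` ({1..t} - {i})))"
      unfolding D_def by (simp add: card_insert_if)
    also have "\<dots> \<le> Suc (card ({1..t} - {i}))"
      by (simp add: card_image_le)
    also have "\<dots> = t"
      using i by simp
    finally show "card (D i) \<le> t" .
    show "{u, v} \<notin> induced_edges F S'" if "u \<in> D i" "v \<in> D i" for u v
    proof
      assume "{u, v} \<in> induced_edges F S'"
      then have "{u, v} \<in> F"
        unfolding induced_edges_def by blast
      moreover have "u \<in> S" "v \<in> S"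
        using D[OF that(1) i] D[OF that(2) i] by auto
      ultimately have "c u \<noteq> c v"
        using proper by blast
      then show False
        using D[OF that(1) i] D[OF that(2) i] by simp
    qed
  next
    fix i j assume ij: "i \<in> {1..t}" "j \<in> {1..t}" "i \<noteq> j"
    have "nb i j \<in> D j" "w i \<in> D i"
      using ij unfolding D_def by auto
    moreover have "D i \<subseteq> S'" "D j \<subseteq> S'"
      using ij unfolding S'_def by blast+
    ultimately have "nb i j \<in> D j" "w i \<in> S'" "nb i j \<in> S'"
      by blast+
    moreover have "{w i, nb i j} \<in> F"
      using nb[OF ij] by (simp add: insert_commute)
    ultimately show "\<exists>u\<in>D j. {w i, u} \<in> induced_edges F S'"
      unfolding induced_edges_def by blast
  qed
  then show ?thesis
    using \<open>S' \<subseteq> S\<close> by blast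
qed

lemma induced_b_colorable_iff_b_atom:
  "induced_b_colorable E V t \<longleftrightarrow> (\<exists>S\<subseteq>V. b_atom S (induced_edges E S) t)"
proof
  assume "induced_b_colorable E V t"
  then obtain S c where S: "S \<subseteq> V" "b_coloring S (induced_edges E S) c t"
    unfolding induced_b_colorable_def by blast
  then obtain S' where S': "S' \<subseteq> S" "b_atom S' (induced_edges (induced_edges E S) S') t"
    using b_coloring_b_atom[OF S(2)] by blast
  moreover have "S' \<subseteq> V"
    using S'(1) S(1) by (rule order_trans)
  ultimately show "\<exists>S\<subseteq>V. b_atom S (induced_edges E S) t"
    by (auto simp: induced_edges_induced_edges)
next
  assume "\<exists>S\<subseteq>V. b_atom S (induced_edges E S) t"
  then obtain S where "S \<subseteq> V" "b_atom S (induced_edges E S) t"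
    by blast
  moreover from this(2) obtain c where "b_coloring S (induced_edges E S) c t"
    by (blast dest: b_atom_b_coloring)
  ultimately show "induced_b_colorable E V t"
    unfolding induced_b_colorable_def by blast
qed

lemma graph_loopless: "graph V E \<Longrightarrow> loopless E"
  unfolding graph_def loopless_def by (force simp: doubleton_eq_iff)

lemma graph_finite: "graph V E \<Longrightarrow> finite V"
  by (simp add: graph_def)

lemma graph_edge_obtain:
  assumes "graph V E" "e \<in> E"
  obtains u w where "u \<noteq> w" "u \<in> V" "w \<in> V" "e = {u, w}"
  using assms unfolding graph_def by blast

lemma graph_edge_subset: "graph V E \<Longrightarrow> e \<in> E \<Longrightarrow> e \<subseteq> V"
  by (elim graph_edge_obtain) auto

lemma del_edges_eq_induced_edges: "graph V E \<Longrightarrow> del_edges E v = induced_edges E (V - {v})"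
  unfolding del_edges_def induced_edges_def by (auto dest: graph_edge_subset)

lemma graph_iso_complete_iff:
  assumes "graph V E" "finite W" "\<And>x y. x \<in> W \<Longrightarrow> y \<in> W \<Longrightarrow> {x, y} \<in> F \<longleftrightarrow> x \<noteq> y"
  shows "graph_iso V E W F \<longleftrightarrow> card V = card W \<and> clique E V"
proof
  assume "graph_iso V E W F"
  then obtain f where f: "bij_betw f V W" "\<forall>u\<in>V. \<forall>v\<in>V. {u, v} \<in> E \<longleftrightarrow> {f u, f v} \<in> F"
    unfolding graph_iso_def by blast
  have "clique E V"
    unfolding clique_def
  proof (intro ballI impI)
    fix u w assume "u \<in> V" "w \<in> V" "u \<noteq> w"
    moreover from this have "f u \<noteq> f w" "f u \<in> W" "f w \<in> W"
      using f(1) by (auto simp: bij_betw_def inj_on_def)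
    ultimately show "{u, w} \<in> E"
      using f(2) assms(3) by blast
  qed
  then show "card V = card W \<and> clique E V"
    using bij_betw_same_card[OF f(1)] by blast
next
  assume complete: "card V = card W \<and> clique E V"
  then obtain f where f: "bij_betw f V W"
    using finite_same_card_bij[OF graph_finite[OF assms(1)] assms(2)] by blast
  have "{u, v} \<in> E \<longleftrightarrow> {f u, f v} \<in> F" if "u \<in> V" "v \<in> V" for u v
  proof -
    have "{u, v} \<in> E \<longleftrightarrow> u \<noteq> v"
      using complete graph_loopless[OF assms(1)] that unfolding clique_def loopless_def by auto
    moreover have "u \<noteq> v \<longleftrightarrow> f u \<noteq> f v" "f u \<in> W" "f v \<in> W"
      using f that by (auto simp: bij_betw_def inj_on_def)
    ultimately show ?thesis
      using assms(3) by blast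
  qed
  then show "graph_iso V E W F"
    unfolding graph_iso_def using f by blast
qed

lemma P2_complete: "x \<in> P2_V \<Longrightarrow> y \<in> P2_V \<Longrightarrow> {x, y} \<in> P2_E \<longleftrightarrow> x \<noteq> y"
  unfolding P2_V_def P2_E_def by (elim insertE emptyE; simp add: doubleton_eq_iff)

lemma C3_complete: "x \<in> C3_V \<Longrightarrow> y \<in> C3_V \<Longrightarrow> {x, y} \<in> C3_E \<longleftrightarrow> x \<noteq> y"
  unfolding C3_V_def C3_E_def by (elim insertE emptyE; simp add: doubleton_eq_iff)

lemma b_chromatic_r_mono:
  assumes "finite B" "loopless E" "A \<subseteq> B"
  shows "b_chromatic_r A E \<le> b_chromatic_r B E"
proof -
  have "induced_b_colorable E A (b_chromatic_r A E)"
    using finite_subset[OF assms(3,1)] assms(2) by (rule induced_b_colorable_b_chromatic_r)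
  then have "induced_b_colorable E B (b_chromatic_r A E)"
    using assms(3) by (rule induced_b_colorable_mono)
  then show ?thesis
    using le_b_chromatic_r_iff[OF assms(1,2)] by simp
qed

lemma b_chromatic_r_le_Suc_delete_vertex:
  assumes "finite V" "loopless E"
  shows "b_chromatic_r V E \<le> Suc (b_chromatic_r (V - {v}) E)"
proof -
  have "induced_b_colorable E V (b_chromatic_r V E)"
    using assms by (rule induced_b_colorable_b_chromatic_r)
  then have "induced_b_colorable E (V - {v}) (b_chromatic_r V E - 1)"
    by (rule induced_b_colorable_delete_vertex)
  then have "b_chromatic_r V E - 1 \<le> b_chromatic_r (V - {v}) E"
    using le_b_chromatic_r_iff[OF finite_Diff[OF assms(1)] assms(2)] by simp
  then show ?thesis
    by simp
qed

lemma clique_card_le_b_chromatic_r: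
  assumes "finite V" "loopless E" "K \<subseteq> V" "clique E K"
  shows "card K \<le> b_chromatic_r V E"
proof -
  have "induced_b_colorable E V (card K)"
    using finite_subset[OF assms(3,1)] assms(3,2,4) by (rule induced_b_colorable_clique)
  then show ?thesis
    using le_b_chromatic_r_iff[OF assms(1,2)] by simp
qed

lemma edge_if_b_chromatic_r_ge_2:
  assumes "finite V" "loopless E" "2 \<le> b_chromatic_r V E"
  obtains u w where "u \<in> V" "w \<in> V" "{u, w} \<in> E"
proof -
  have "induced_b_colorable E V (b_chromatic_r V E)"
    using assms(1,2) by (rule induced_b_colorable_b_chromatic_r)
  moreover have "\<not> b_chromatic_r V E \<le> 1"
    using assms(3) by simp
  ultimately have "\<not> (\<forall>u\<in>V. \<forall>w\<in>V. {u, w} \<notin> E)"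
    using induced_b_colorable_edgeless by blast
  then show ?thesis
    using that by blast
qed

lemma b_chromatic_r_edge:
  assumes "graph V E" "{u, w} \<in> E" "u \<in> A" "w \<in> A" "finite A"
  shows "2 \<le> b_chromatic_r A E"
proof -
  have "u \<noteq> w"
    using graph_loopless[OF assms(1)] assms(2) unfolding loopless_def by auto
  moreover have "clique E {u, w}"
    using assms(2) unfolding clique_def by (auto simp: insert_commute)
  ultimately show ?thesis
    using clique_card_le_b_chromatic_r[OF assms(5) graph_loopless[OF assms(1)], of "{u, w}"] assms(3,4)
    by simp
qed

lemma b_chromatic_r_nonempty:
  assumes "finite A" "loopless E" "a \<in> A"
  shows "1 \<le> b_chromatic_r A E"
  using clique_card_le_b_chromatic_r[OF assms(1,2), of "{a}"] assms(3) by (simp add: clique_def)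

lemma clique_subset: "clique E A \<Longrightarrow> B \<subseteq> A \<Longrightarrow> clique E B"
  unfolding clique_def by blast

lemma clique_if_clique_after_every_deletion:
  assumes "finite V" "3 \<le> card V" "\<forall>v\<in>V. clique E (V - {v})"
  shows "clique E V"
  unfolding clique_def
proof (intro ballI impI)
  fix u w assume uw: "u \<in> V" "w \<in> V" "u \<noteq> w"
  have "\<not> V \<subseteq> {u, w}"
  proof
    assume "V \<subseteq> {u, w}"
    then have "card V \<le> card {u, w}"
      by (intro card_mono) auto
    then show False
      using assms(2) uw(3) by simp
  qed
  then obtain z where "z \<in> V" "z \<noteq> u" "z \<noteq> w"
    by blast
  then have "clique E (V - {z})" "u \<in> V - {z}" "w \<in> V - {z}"
    using assms(3) uw by auto
  then show "{u, w} \<in> E"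
    using uw(3) unfolding clique_def by blast
qed

lemma intersecting_edges_share_vertex:
  assumes G: "graph V E" and "E \<noteq> {}" and meet: "\<forall>e1\<in>E. \<forall>e2\<in>E. e1 \<inter> e2 \<noteq> {}"
    and no_triangle: "\<not> (\<exists>T\<subseteq>V. card T = 3 \<and> clique E T)"
  shows "\<exists>v\<in>V. \<forall>e\<in>E. v \<in> e"
proof (rule ccontr)
  assume no_center: "\<not> (\<exists>v\<in>V. \<forall>e\<in>E. v \<in> e)"
  obtain e0 where "e0 \<in> E"
    using \<open>E \<noteq> {}\<close> by blast
  then obtain a b where ab: "a \<noteq> b" "a \<in> V" "b \<in> V" "e0 = {a, b}"
    by (rule graph_edge_obtain[OF G])
  with \<open>e0 \<in> E\<close> have ab_E: "{a, b} \<in> E"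
    by simp
  have other_end: "\<exists>x. e = {y, x}" if e: "e \<in> E" "y \<in> e" for e y
  proof -
    obtain u w where "e = {u, w}"
      using graph_edge_obtain[OF G e(1)] by blast
    with e(2) have "e = {y, w} \<or> e = {y, u}"
      by (auto simp: insert_commute)
    then show ?thesis
      by blast
  qed
  obtain e1 where e1: "e1 \<in> E" "a \<notin> e1"
    using no_center ab(2) by blast
  moreover have "e1 \<inter> {a, b} \<noteq> {}"
    using meet e1(1) ab_E by blast
  ultimately have "b \<in> e1"
    by blast
  then obtain x where x: "e1 = {b, x}"
    using other_end[OF e1(1)] by blast
  obtain e2 where e2: "e2 \<in> E" "b \<notin> e2"
    using no_center ab(3) by blast
  moreover have "e2 \<inter> {a, b} \<noteq> {}"
    using meet e2(1) ab_E by blast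
  ultimately have "a \<in> e2"
    by blast
  then obtain y where y: "e2 = {a, y}"
    using other_end[OF e2(1)] by blast
  have "e1 \<inter> e2 \<noteq> {}"
    using meet e1(1) e2(1) by blast
  then have "x = y"
    using e1(2) e2(2) unfolding x y by blast
  have "x \<in> V" "x \<noteq> a" "x \<noteq> b"
    using graph_edge_subset[OF G e1(1)] e1(2) e2(2) x y \<open>x = y\<close> by auto
  then have "{a, b, x} \<subseteq> V" "card {a, b, x} = 3"
    using ab by auto
  moreover have "{a, b} \<in> E" "{b, x} \<in> E" "{a, x} \<in> E"
    using ab_E e1(1) e2(1) x y \<open>x = y\<close> by simp_all
  then have "clique E {a, b, x}"
    unfolding clique_def by (auto simp: insert_commute)
  ultimately show False
    using no_triangle by blast
qed

lemma triangle_in_four: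
  assumes "T \<subseteq> {p, q, r, s}" "card T = 3" "clique E T"
  shows "({p, q} \<in> E \<and> {p, r} \<in> E \<and> {q, r} \<in> E) \<or> ({p, q} \<in> E \<and> {p, s} \<in> E \<and> {q, s} \<in> E) \<or>
    ({p, r} \<in> E \<and> {p, s} \<in> E \<and> {r, s} \<in> E) \<or> ({q, r} \<in> E \<and> {q, s} \<in> E \<and> {r, s} \<in> E)"
proof -
  obtain x y z where T: "T = {x, y, z}" "x \<noteq> y" "y \<noteq> z" "x \<noteq> z"
    using card_3_iff[THEN iffD1, OF assms(2)] by blast
  then have "{x, y} \<in> E" "{y, z} \<in> E" "{x, z} \<in> E"
    using assms(3) unfolding clique_def by auto
  moreover have "x \<in> {p, q, r, s}" "y \<in> {p, q, r, s}" "z \<in> {p, q, r, s}"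
    using assms(1) T(1) by auto
  ultimately show ?thesis
    using T(2-4) by (elim insertE emptyE) (simp_all add: insert_commute)
qed

lemma card_5_obtain:
  assumes "card S = 5"
  obtains a b c d e where "S = {a, b, c, d, e}" "distinct [a, b, c, d, e]"
proof -
  obtain a B where aB: "S = insert a B" "a \<notin> B" "card B = Suc 3"
    using card_eq_SucD[of S 4] assms by auto
  obtain b C where bC: "B = insert b C" "b \<notin> C" "card C = 3"
    using card_eq_SucD[OF aB(3)] by auto
  obtain c d e where "C = {c, d, e}" "c \<noteq> d" "d \<noteq> e" "c \<noteq> e"
    using card_3_iff[THEN iffD1, OF bC(3)] by blast
  then show ?thesis
    using that aB(1,2) bC(1,2) by auto
qed

text \<open>After naming the five vertices this is a propositional check over the ten possible edges.\<close>
lemma K4_if_triangle_after_every_deletion: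
  assumes "card V = 5" and tri: "\<forall>v\<in>V. \<exists>T\<subseteq>V - {v}. card T = 3 \<and> clique E T"
  shows "\<exists>K\<subseteq>V. card K = 4 \<and> clique E K"
proof (rule ccontr)
  assume no_K4: "\<not> (\<exists>K\<subseteq>V. card K = 4 \<and> clique E K)"
  obtain a b c d e where V: "V = {a, b, c, d, e}" and dist: "distinct [a, b, c, d, e]"
    using card_5_obtain[OF assms(1)] by blast
  have K4: "\<not> ({w, x} \<in> E \<and> {w, y} \<in> E \<and> {w, z} \<in> E \<and> {x, y} \<in> E \<and> {x, z} \<in> E \<and> {y, z} \<in> E)"
    if "{w, x, y, z} \<subseteq> V" "distinct [w, x, y, z]" for w x y z
  proof
    assume "{w, x} \<in> E \<and> {w, y} \<in> E \<and> {w, z} \<in> E \<and> {x, y} \<in> E \<and> {x, z} \<in> E \<and> {y, z} \<in> E"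
    then have "clique E {w, x, y, z}"
      unfolding clique_def by (auto simp: insert_commute)
    moreover have "card {w, x, y, z} = 4"
      using that(2) by simp
    ultimately show False
      using no_K4 that(1) by blast
  qed
  have four: "({p, q} \<in> E \<and> {p, r} \<in> E \<and> {q, r} \<in> E) \<or> ({p, q} \<in> E \<and> {p, s} \<in> E \<and> {q, s} \<in> E) \<or>
      ({p, r} \<in> E \<and> {p, s} \<in> E \<and> {r, s} \<in> E) \<or> ({q, r} \<in> E \<and> {q, s} \<in> E \<and> {r, s} \<in> E)"
    if v: "v \<in> V" "V - {v} = {p, q, r, s}" for v p q r s
  proof -
    obtain T where T: "T \<subseteq> V - {v}" "card T = 3" "clique E T"
      using tri v(1) by blast
    then have "T \<subseteq> {p, q, r, s}"
      using v(2) by simp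
    then show ?thesis
      using T(2,3) by (rule triangle_in_four)
  qed
  have del: "V - {a} = {b, c, d, e}" "V - {b} = {a, c, d, e}" "V - {c} = {a, b, d, e}"
    "V - {d} = {a, b, c, e}" "V - {e} = {a, b, c, d}"
    using V dist by auto
  have mem: "a \<in> V" "b \<in> V" "c \<in> V" "d \<in> V" "e \<in> V"
    using V by auto
  have sub: "{b, c, d, e} \<subseteq> V" "{a, c, d, e} \<subseteq> V" "{a, b, d, e} \<subseteq> V" "{a, b, c, e} \<subseteq> V"
    "{a, b, c, d} \<subseteq> V"
    using V by auto
  have dist4: "distinct [b, c, d, e]" "distinct [a, c, d, e]" "distinct [a, b, d, e]"
    "distinct [a, b, c, e]" "distinct [a, b, c, d]"
    using dist by auto
  show False
    using four[OF mem(1) del(1)] four[OF mem(2) del(2)] four[OF mem(3) del(3)]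
      four[OF mem(4) del(4)] four[OF mem(5) del(5)]
      K4[OF sub(1) dist4(1)] K4[OF sub(2) dist4(2)] K4[OF sub(3) dist4(3)]
      K4[OF sub(4) dist4(4)] K4[OF sub(5) dist4(5)]
    by argo
qed

lemma Diff_singleton_nonempty:
  assumes "2 \<le> card V"
  shows "V - {v} \<noteq> {}"
proof
  assume "V - {v} = {}"
  then have "card V \<le> card {v}"
    by (intro card_mono) auto
  then show False
    using assms by simp
qed

lemma b_chromatic_r_drop_at_every_vertex_iff_clique:
  assumes G: "graph V E" and n: "2 \<le> card V" "card V \<le> 3"
  shows "(\<forall>v\<in>V. Suc (b_chromatic_r (V - {v}) E) = b_chromatic_r V E) \<longleftrightarrow> clique E V"
proof -
  have fin: "finite V" and loop: "loopless E"
    using graph_finite[OF G] graph_loopless[OF G] .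
  have le_card: "b_chromatic_r A E \<le> card A" if "finite A" for A
    using induced_b_colorable_le_card[OF that induced_b_colorable_b_chromatic_r[OF that loop]] .
  have nonempty: "1 \<le> b_chromatic_r (V - {v}) E" for v
  proof -
    obtain u where "u \<in> V - {v}"
      using Diff_singleton_nonempty[OF n(1)] by blast
    then show ?thesis
      by (rule b_chromatic_r_nonempty[OF finite_Diff[OF fin] loop])
  qed
  show ?thesis
  proof
    assume drop: "\<forall>v\<in>V. Suc (b_chromatic_r (V - {v}) E) = b_chromatic_r V E"
    show "clique E V"
    proof (rule ccontr)
      assume "\<not> clique E V"
      then have "\<not> card V \<le> b_chromatic_r V E"
        using clique_if_induced_b_colorable_card[OF fin induced_b_colorable_b_chromatic_r[OF fin loop]]
        by blast
      show False
      proof (cases "b_chromatic_r V E \<le> 1")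
        case True
        obtain v where "v \<in> V"
          using Diff_singleton_nonempty[OF n(1)] by blast
        then have "Suc (b_chromatic_r (V - {v}) E) = b_chromatic_r V E"
          using drop by blast
        then show False
          using nonempty[of v] True by simp
      next
        case False
        then have "2 \<le> b_chromatic_r V E"
          by simp
        then obtain x y where xy: "x \<in> V" "y \<in> V" "{x, y} \<in> E"
          by (rule edge_if_b_chromatic_r_ge_2[OF fin loop])
        have "V \<noteq> {x, y}"
          using \<open>\<not> clique E V\<close> xy(3) unfolding clique_def by (auto simp: insert_commute)
        then obtain v where v: "v \<in> V" "v \<noteq> x" "v \<noteq> y"
          using xy(1,2) by blast
        then have "x \<in> V - {v}" "y \<in> V - {v}"
          using xy(1,2) by auto
        then have "2 \<le> b_chromatic_r (V - {v}) E"
          using finite_Diff[OF fin] by (rule b_chromatic_r_edge[OF G xy(3)])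
        moreover have "Suc (b_chromatic_r (V - {v}) E) = b_chromatic_r V E"
          using drop v(1) by blast
        ultimately show False
          using \<open>\<not> card V \<le> b_chromatic_r V E\<close> n(2) by linarith
      qed
    qed
  next
    assume "clique E V"
    then have "card V \<le> b_chromatic_r V E"
      by (rule clique_card_le_b_chromatic_r[OF fin loop order_refl])
    then have "b_chromatic_r V E = card V"
      using le_card[OF fin] by linarith
    moreover have "b_chromatic_r (V - {v}) E = card V - 1" if "v \<in> V" for v
    proof -
      have "clique E (V - {v})"
        using \<open>clique E V\<close> Diff_subset by (rule clique_subset)
      then have "card (V - {v}) \<le> b_chromatic_r (V - {v}) E"
        by (rule clique_card_le_b_chromatic_r[OF finite_Diff[OF fin] loop order_refl])
      moreover have "card (V - {v}) = card V - 1"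
        using that fin by simp
      ultimately show ?thesis
        using le_card[OF finite_Diff[OF fin, of "{v}"]] by linarith
    qed
    ultimately show "\<forall>v\<in>V. Suc (b_chromatic_r (V - {v}) E) = b_chromatic_r V E"
      using n(1) by auto
  qed
qed

lemma b_chromatic_r_edgeless:
  assumes "finite A" "loopless E" "\<forall>u\<in>A. \<forall>w\<in>A. {u, w} \<notin> E"
  shows "b_chromatic_r A E \<le> 1"
  using induced_b_colorable_edgeless[OF induced_b_colorable_b_chromatic_r[OF assms(1,2)] assms(3)] .

lemma b_chromatic_r_stable_if_two_disjoint_edges:
  assumes G: "graph V E" and e: "e1 \<in> E" "e2 \<in> E" "e1 \<inter> e2 = {}"
    and lt3: "b_chromatic_r V E < 3" and v: "v \<in> V"
  shows "b_chromatic_r (V - {v}) E = b_chromatic_r V E"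
proof -
  have fin: "finite V" and loop: "loopless E"
    using graph_finite[OF G] graph_loopless[OF G] .
  obtain e where e': "e \<in> E" "v \<notin> e"
    using e by blast
  obtain x y where "x \<noteq> y" "x \<in> V" "y \<in> V" "e = {x, y}"
    by (rule graph_edge_obtain[OF G e'(1)])
  then have "{x, y} \<in> E" "x \<in> V - {v}" "y \<in> V - {v}"
    using e' by auto
  then have "2 \<le> b_chromatic_r (V - {v}) E"
    using finite_Diff[OF fin] by (rule b_chromatic_r_edge[OF G])
  moreover have "b_chromatic_r (V - {v}) E \<le> b_chromatic_r V E"
    using b_chromatic_r_mono[OF fin loop Diff_subset] .
  ultimately show ?thesis
    using lt3 by linarith
qed

text \<open>If every vertex deletion keeps \<open>\<phi>\<^sub>r = p \<ge> 3\<close>, then p is at most |V| - 2 (otherwise every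
  vertex-deleted subgraph, hence G, would be complete), so |V| = 5, p = 3, and G is K4-free
  while every 4-vertex subgraph keeps a triangle.\<close>
lemma b_chromatic_r_lt_3_if_stable:
  assumes G: "graph V E" and n: "4 \<le> card V" "card V \<le> 5"
    and stable: "\<forall>v\<in>V. b_chromatic_r (V - {v}) E = b_chromatic_r V E"
  shows "b_chromatic_r V E < 3"
proof (rule ccontr)
  assume "\<not> b_chromatic_r V E < 3"
  have fin: "finite V" and loop: "loopless E"
    using graph_finite[OF G] graph_loopless[OF G] .
  let ?p = "b_chromatic_r V E"
  have colorable: "induced_b_colorable E (V - {v}) ?p" if "v \<in> V" for v
    using induced_b_colorable_b_chromatic_r[OF finite_Diff[OF fin, of "{v}"] loop] stable that by simp
  have card_del: "card (V - {v}) = card V - 1" if "v \<in> V" for v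
    using fin that by simp
  obtain v0 where "v0 \<in> V"
    using Diff_singleton_nonempty[of V] n(1) by fastforce
  have "?p \<le> card V - 1"
    using induced_b_colorable_le_card[OF finite_Diff[OF fin] colorable[OF \<open>v0 \<in> V\<close>]]
      card_del[OF \<open>v0 \<in> V\<close>] by simp
  moreover have "?p \<noteq> card V - 1"
  proof
    assume "?p = card V - 1"
    then have "clique E (V - {v})" if "v \<in> V" for v
      using clique_if_induced_b_colorable_card[OF finite_Diff[OF fin] colorable[OF that]]
        card_del[OF that] by simp
    then have "clique E V"
      using clique_if_clique_after_every_deletion[OF fin] n(1) by simp
    then have "card V \<le> ?p"
      by (rule clique_card_le_b_chromatic_r[OF fin loop order_refl])
    then show False
      using \<open>?p = card V - 1\<close> n(1) by simp
  qed
  ultimately have "?p \<le> card V - 2"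
    by linarith
  then have five: "card V = 5" and p3: "?p = 3"
    using \<open>\<not> ?p < 3\<close> n by linarith+
  have "\<forall>v\<in>V. \<exists>T\<subseteq>V - {v}. card T = 3 \<and> clique E T"
  proof
    fix v assume "v \<in> V"
    show "\<exists>T\<subseteq>V - {v}. card T = 3 \<and> clique E T"
    proof (rule triangle_if_induced_b_colorable_3[OF finite_Diff[OF fin]])
      show "card (V - {v}) \<le> 4"
        using card_del[OF \<open>v \<in> V\<close>] five by simp
      show "induced_b_colorable E (V - {v}) 3"
        using colorable[OF \<open>v \<in> V\<close>] p3 by simp
    qed
  qed
  from K4_if_triangle_after_every_deletion[OF five this]
  obtain K where K: "K \<subseteq> V" "card K = 4" "clique E K"
    by blast
  have "card K \<le> ?p"
    using K(1,3) by (rule clique_card_le_b_chromatic_r[OF fin loop])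
  then show False
    using K(2) p3 by simp
qed

lemma two_disjoint_edges_if_stable:
  assumes G: "graph V E" and "E \<noteq> {}" and lt3: "b_chromatic_r V E < 3"
    and stable: "\<forall>v\<in>V. b_chromatic_r (V - {v}) E = b_chromatic_r V E"
  shows "\<exists>e1\<in>E. \<exists>e2\<in>E. e1 \<inter> e2 = {}"
proof (rule ccontr)
  assume meet: "\<not> (\<exists>e1\<in>E. \<exists>e2\<in>E. e1 \<inter> e2 = {})"
  have fin: "finite V" and loop: "loopless E"
    using graph_finite[OF G] graph_loopless[OF G] .
  have no_triangle: "\<not> (\<exists>T\<subseteq>V. card T = 3 \<and> clique E T)"
  proof
    assume "\<exists>T\<subseteq>V. card T = 3 \<and> clique E T"
    then obtain T where T: "T \<subseteq> V" "card T = 3" "clique E T"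
      by blast
    have "card T \<le> b_chromatic_r V E"
      using T(1,3) by (rule clique_card_le_b_chromatic_r[OF fin loop])
    then show False
      using T(2) lt3 by simp
  qed
  have "\<forall>e1\<in>E. \<forall>e2\<in>E. e1 \<inter> e2 \<noteq> {}"
    using meet by blast
  then obtain v where v: "v \<in> V" "\<forall>e\<in>E. v \<in> e"
    using intersecting_edges_share_vertex[OF G \<open>E \<noteq> {}\<close> _ no_triangle] by blast
  have "\<forall>u\<in>V - {v}. \<forall>w\<in>V - {v}. {u, w} \<notin> E"
  proof (intro ballI notI)
    fix u w assume uw: "u \<in> V - {v}" "w \<in> V - {v}" "{u, w} \<in> E"
    have "v \<in> {u, w}"
      using v(2) uw(3) by (rule bspec)
    then show False
      using uw(1,2) by auto
  qed
  then have "b_chromatic_r (V - {v}) E \<le> 1"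
    by (rule b_chromatic_r_edgeless[OF finite_Diff[OF fin] loop])
  moreover obtain e where "e \<in> E"
    using \<open>E \<noteq> {}\<close> by blast
  then obtain x y where xy: "x \<noteq> y" "x \<in> V" "y \<in> V" "e = {x, y}"
    by (rule graph_edge_obtain[OF G])
  with \<open>e \<in> E\<close> have "{x, y} \<in> E"
    by simp
  then have "2 \<le> b_chromatic_r V E"
    using xy(2,3) fin by (rule b_chromatic_r_edge[OF G])
  ultimately show False
    using stable v(1) by simp
qed

lemma b_chromatic_r_stable_iff:
  assumes G: "graph V E" and n: "4 \<le> card V" "card V \<le> 5"
  shows "(\<forall>v\<in>V. b_chromatic_r (V - {v}) E = b_chromatic_r V E) \<longleftrightarrow>
    E = {} \<or> ((\<exists>e1\<in>E. \<exists>e2\<in>E. e1 \<inter> e2 = {}) \<and> b_chromatic_r V E < 3)"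
proof
  assume stable: "\<forall>v\<in>V. b_chromatic_r (V - {v}) E = b_chromatic_r V E"
  then have "b_chromatic_r V E < 3"
    by (rule b_chromatic_r_lt_3_if_stable[OF G n])
  then show "E = {} \<or> ((\<exists>e1\<in>E. \<exists>e2\<in>E. e1 \<inter> e2 = {}) \<and> b_chromatic_r V E < 3)"
    using two_disjoint_edges_if_stable[OF G _ _ stable] by blast
next
  have fin: "finite V" and loop: "loopless E"
    using graph_finite[OF G] graph_loopless[OF G] .
  assume "E = {} \<or> ((\<exists>e1\<in>E. \<exists>e2\<in>E. e1 \<inter> e2 = {}) \<and> b_chromatic_r V E < 3)"
  then show "\<forall>v\<in>V. b_chromatic_r (V - {v}) E = b_chromatic_r V E"
  proof
    assume "E = {}"
    have one: "b_chromatic_r A E = 1" if "A \<subseteq> V" "a \<in> A" for A a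
      using b_chromatic_r_edgeless[OF finite_subset[OF that(1) fin] loop]
        b_chromatic_r_nonempty[OF finite_subset[OF that(1) fin] loop that(2)] \<open>E = {}\<close> by simp
    show ?thesis
    proof
      fix v assume "v \<in> V"
      have "V - {v} \<noteq> {}"
        using Diff_singleton_nonempty[of V v] n(1) by simp
      then obtain a where "a \<in> V - {v}"
        by blast
      then have "b_chromatic_r (V - {v}) E = 1"
        by (rule one[OF Diff_subset])
      moreover have "b_chromatic_r V E = 1"
        using one[OF order_refl] \<open>a \<in> V - {v}\<close> by blast
      ultimately show "b_chromatic_r (V - {v}) E = b_chromatic_r V E"
        by simp
    qed
  next
    assume "(\<exists>e1\<in>E. \<exists>e2\<in>E. e1 \<inter> e2 = {}) \<and> b_chromatic_r V E < 3"
    then obtain e1 e2 where "e1 \<in> E" "e2 \<in> E" "e1 \<inter> e2 = {}" "b_chromatic_r V E < 3"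
      by blast
    then show ?thesis
      using b_chromatic_r_stable_if_two_disjoint_edges[OF G] by simp
  qed
qed

theorem mainTheorem14:
  fixes V :: "'a set" and E :: "'a set set"
  assumes "graph V E" and "V \<noteq> {}"
  shows "(\<forall>v\<in>V. int (b_chromatic_r (V - {v}) (del_edges E v))
              = int (b_chromatic_r V E) + int (card V div 2) - 2)
     \<longleftrightarrow> (graph_iso V E P2_V P2_E \<or> graph_iso V E C3_V C3_E
          \<or> (E = {} \<and> 4 \<le> card V \<and> card V \<le> 5)
          \<or> (4 \<le> card V \<and> card V \<le> 5 \<and> (\<exists>e1\<in>E. \<exists>e2\<in>E. e1 \<inter> e2 = {})
             \<and> \<not> (\<exists>S. S \<subseteq> V \<and> b_atom S (induced_edges E S) 3)))"
proof -
  have fin: "finite V" and loop: "loopless E"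
    using graph_finite[OF assms(1)] graph_loopless[OF assms(1)] .
  have del: "b_chromatic_r (V - {v}) (del_edges E v) = b_chromatic_r (V - {v}) E" for v
    using del_edges_eq_induced_edges[OF assms(1)] b_chromatic_r_induced_edges by simp
  have atom: "(\<exists>S. S \<subseteq> V \<and> b_atom S (induced_edges E S) 3) \<longleftrightarrow> 3 \<le> b_chromatic_r V E"
    using induced_b_colorable_iff_b_atom le_b_chromatic_r_iff[OF fin loop] by blast
  have "finite P2_V" "card P2_V = 2" "finite C3_V" "card C3_V = 3"
    by (simp_all add: P2_V_def C3_V_def)
  then have P2: "graph_iso V E P2_V P2_E \<longleftrightarrow> card V = 2 \<and> clique E V"
    and C3: "graph_iso V E C3_V C3_E \<longleftrightarrow> card V = 3 \<and> clique E V"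
    using graph_iso_complete_iff[OF assms(1) _ P2_complete, of P2_V]
      graph_iso_complete_iff[OF assms(1) _ C3_complete, of C3_V] by simp_all
  consider "card V \<le> 1 \<or> 6 \<le> card V" | "2 \<le> card V" "card V \<le> 3" | "4 \<le> card V" "card V \<le> 5"
    by linarith
  then show ?thesis
  proof cases
    case 1
    obtain v where "v \<in> V"
      using assms(2) by blast
    have "b_chromatic_r (V - {v}) E \<le> b_chromatic_r V E"
      "b_chromatic_r V E \<le> Suc (b_chromatic_r (V - {v}) E)"
      using b_chromatic_r_mono[OF fin loop Diff_subset] b_chromatic_r_le_Suc_delete_vertex[OF fin loop] .
    moreover have "card V div 2 = 0 \<or> 3 \<le> card V div 2"
      using 1 div_le_mono[of 6 "card V" 2] by (auto simp: le_Suc_eq)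
    ultimately have "int (b_chromatic_r (V - {v}) E) \<noteq> int (b_chromatic_r V E) + int (card V div 2) - 2"
      by linarith
    then have "\<not> (\<forall>v\<in>V. int (b_chromatic_r (V - {v}) E) = int (b_chromatic_r V E) + int (card V div 2) - 2)"
      using \<open>v \<in> V\<close> by blast
    moreover have "\<not> graph_iso V E P2_V P2_E" "\<not> graph_iso V E C3_V C3_E"
      using 1 P2 C3 by auto
    ultimately show ?thesis
      using 1 unfolding del by auto
  next
    case 2
    then have "card V div 2 = 1"
      by auto
    then show ?thesis
      using b_chromatic_r_drop_at_every_vertex_iff_clique[OF assms(1) 2] 2 P2 C3 unfolding del
      by auto
  next
    case 3
    then have "card V div 2 = 2"
      by auto
    then show ?thesis
      using b_chromatic_r_stable_iff[OF assms(1) 3] 3 P2 C3 atom unfolding del by auto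
  qed
qed

end
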